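(* Let $D_i$, $i\in\mathbb{Z}$, be i.i.d. non-negative integer-valued random variables with law $F$ having finite second moment. Fix $\alpha>0$. For $d\in\mathbb{N}$ let $D_i^d=\max\{D_i-d,0\}$ and $\mu_d=\mathbb{E}[D_i^d]$. If $d$ is such that $\mu_d<\alpha/18$, then $\mathbb{E}[|C^{d,\alpha}|]<\infty$.
   Context: A vertex $i\in\mathbb{Z}$ is $\alpha$-claimed on level $d$ iff $\sum_{k=i-m}^{i+m}D_k^d\ge\alpha m$ for some integer $m\ge1$. A cluster of $\alpha$-claimed vertices is a maximal set of consecutive $\alpha$-claimed vertices; $C^{d,\alpha}$ denotes the cluster containing the origin (empty if the origin is not $\alpha$-claimed). *)

theory Defs
  imports "HOL-Probability.Probability"
begin

text \<open>Truncated variable: D^d_k = max(D_k - d, 0); nat subtraction truncates.\<close>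
definition trunc_var :: "(int \<Rightarrow> 'a \<Rightarrow> nat) \<Rightarrow> nat \<Rightarrow> int \<Rightarrow> 'a \<Rightarrow> nat" where
  "trunc_var D d k \<omega> = D k \<omega> - d"

definition claimed :: "(int \<Rightarrow> 'a \<Rightarrow> nat) \<Rightarrow> nat \<Rightarrow> real \<Rightarrow> 'a \<Rightarrow> int \<Rightarrow> bool" where
  "claimed D d \<alpha> \<omega> i \<longleftrightarrow>
     (\<exists>m::nat. m \<ge> 1 \<and>
        (\<Sum>k\<in>{i - int m .. i + int m}. real (trunc_var D d k \<omega>)) \<ge> \<alpha> * real m)"

text \<open>The cluster of alpha-claimed vertices containing the origin: the maximal set of
  consecutive claimed vertices containing 0 (empty if 0 is not claimed).\<close>
definition cluster0 :: "(int \<Rightarrow> 'a \<Rightarrow> nat) \<Rightarrow> nat \<Rightarrow> real \<Rightarrow> 'a \<Rightarrow> int set" where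
  "cluster0 D d \<alpha> \<omega> =
     {j. \<forall>k. min 0 j \<le> k \<and> k \<le> max 0 j \<longrightarrow> claimed D d \<alpha> \<omega> k}"

definition set_size :: "int set \<Rightarrow> ennreal" where
  "set_size C = (if finite C then of_nat (card C) else \<infinity>)"

end

theory Submission
  imports Defs
begin

text \<open>
  Write X k for D_k^d. If every vertex between 0 and j is claimed, each of them is the centre of
  a window of some radius m \<ge> 1 carrying mass at least \<alpha> m. A Vitali-type selection (keep a
  window of maximal radius, drop the windows meeting it, cover those near it by its threefold
  enlargement) shows that the union of these windows, an integer interval [-a, b] containing 0 and
  j, carries mass at least \<alpha>/7 times its length. Hence (\<alpha>/7 - \<gamma>)(|j| + 1) \<le> X 0 + R + L for
  every 0 \<le> \<gamma> \<le> \<alpha>/7, where R and L are the suprema of the partial sums of the i.i.d. sequences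
  X k - \<gamma> to the right and to the left of the origin. For \<gamma> = \<alpha>/18 these increments have
  negative mean and finite second moment, and squaring Lindley's recursion gives Kingman's bound
  E (sup of the partial sums) \<le> E Y^2 / (2 |E Y|). So |C| \<le> 2 (X 0 + R + L) / (\<alpha>/7 - \<gamma>) + 3
  has finite expectation.
\<close>

section \<open>Suprema of random walks with negative drift\<close>

lemma (in prob_space) indep_vars_reindex:
  assumes indep: "indep_vars M' X (\<sigma> ` I)" and "inj_on \<sigma> I"
  shows "indep_vars (\<lambda>i. M' (\<sigma> i)) (\<lambda>i. X (\<sigma> i)) I"
proof -
  let ?F = "\<lambda>i. {X i -` A \<inter> space M | A. A \<in> sets (M' i)}"
  have rv: "\<forall>i\<in>\<sigma> ` I. random_variable (M' i) (X i)"
    and indep_sets: "indep_sets ?F (\<sigma> ` I)"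
    using indep unfolding indep_vars_def2 by auto
  show ?thesis
    unfolding indep_vars_def2
  proof (intro conjI)
    show "\<forall>i\<in>I. random_variable (M' (\<sigma> i)) (X (\<sigma> i))"
      using rv by auto
    show "indep_sets (\<lambda>i. ?F (\<sigma> i)) I"
      unfolding indep_sets_def
    proof (intro conjI ballI allI impI)
      fix i assume "i \<in> I"
      then show "?F (\<sigma> i) \<subseteq> events"
        using indep_sets unfolding indep_sets_def by auto
    next
      fix J A assume J: "J \<subseteq> I" "J \<noteq> {}" "finite J" and A: "A \<in> Pi J (\<lambda>i. ?F (\<sigma> i))"
      have "inj_on \<sigma> J"
        using \<open>inj_on \<sigma> I\<close> J(1) by (rule inj_on_subset)
      define B where "B k = A (the_inv_into J \<sigma> k)" for k
      have B: "B (\<sigma> j) = A j" if "j \<in> J" for j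
        unfolding B_def using \<open>inj_on \<sigma> J\<close> that by (simp add: the_inv_into_f_f)
      have "B \<in> Pi (\<sigma> ` J) ?F"
        using A B by (auto simp: Pi_iff)
      moreover have "\<sigma> ` J \<subseteq> \<sigma> ` I" "\<sigma> ` J \<noteq> {}" "finite (\<sigma> ` J)"
        using J by auto
      ultimately have "prob (\<Inter>k\<in>\<sigma> ` J. B k) = (\<Prod>k\<in>\<sigma> ` J. prob (B k))"
        using indep_sets unfolding indep_sets_def by blast
      moreover have "(\<Inter>k\<in>\<sigma> ` J. B k) = (\<Inter>j\<in>J. A j)"
        using B by auto
      moreover have "(\<Prod>k\<in>\<sigma> ` J. prob (B k)) = (\<Prod>j\<in>J. prob (A j))"
        using B \<open>inj_on \<sigma> J\<close> by (simp add: prod.reindex)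
      ultimately show "prob (\<Inter>j\<in>J. A j) = (\<Prod>j\<in>J. prob (A j))"
        by simp
    qed
  qed
qed

lemma abs_max_zero_add_le: "\<bar>max 0 (a + b)\<bar> \<le> \<bar>a\<bar> + \<bar>b\<bar>" for a b :: real
  by linarith

lemma power2_max_zero_add_le: "(max 0 (a + b))\<^sup>2 \<le> 2 * a\<^sup>2 + 2 * b\<^sup>2" for a b :: real
proof -
  have "(max 0 (a + b))\<^sup>2 \<le> (a + b)\<^sup>2"
    by (simp add: max_def)
  also have "\<dots> \<le> 2 * a\<^sup>2 + 2 * b\<^sup>2"
    using sum_squares_ge_zero[of "a - b" 0] by (simp add: power2_eq_square algebra_simps)
  finally show ?thesis .
qed

lemma abs_mult_le_sum_power2: "\<bar>a * b\<bar> \<le> a\<^sup>2 + b\<^sup>2" for a b :: real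
proof -
  have "0 \<le> (\<bar>a\<bar> - \<bar>b\<bar>)\<^sup>2"
    by simp
  then have "2 * (\<bar>a\<bar> * \<bar>b\<bar>) \<le> a\<^sup>2 + b\<^sup>2"
    by (simp add: power2_eq_square algebra_simps)
  moreover have "0 \<le> \<bar>a\<bar> * \<bar>b\<bar>"
    by simp
  ultimately show ?thesis
    unfolding abs_mult by linarith
qed

lemma power2_diff_le: "(a - b)\<^sup>2 \<le> 2 * a\<^sup>2 + 2 * b\<^sup>2" for a b :: real
  using sum_squares_ge_zero[of "a + b" 0] by (simp add: power2_eq_square algebra_simps)

text \<open>Lindley's recursion: max_partial_sum n x is the largest of the partial sums
  x 0 + ... + x (k - 1) with k \<le> n (the empty sum included).\<close>
fun max_partial_sum :: "nat \<Rightarrow> (nat \<Rightarrow> real) \<Rightarrow> real" where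
  "max_partial_sum 0 x = 0"
| "max_partial_sum (Suc n) x = max 0 (x 0 + max_partial_sum n (\<lambda>i. x (Suc i)))"

lemma max_partial_sum_nonneg: "0 \<le> max_partial_sum n x"
  by (cases n) auto

lemma max_partial_sum_mono: "max_partial_sum n x \<le> max_partial_sum (Suc n) x"
proof (induction n arbitrary: x)
  case (Suc n)
  have "max_partial_sum n (\<lambda>i. x (Suc i)) \<le> max_partial_sum (Suc n) (\<lambda>i. x (Suc i))"
    by (rule Suc.IH)
  then show ?case
    unfolding max_partial_sum.simps(2)[of n] max_partial_sum.simps(2)[of "Suc n"]
    by (intro max.mono add_left_mono order_refl)
qed simp

lemma sum_le_max_partial_sum: "(\<Sum>i<n. x i) \<le> max_partial_sum n x"
proof (induction n arbitrary: x)
  case (Suc n)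
  have "(\<Sum>i<Suc n. x i) = x 0 + (\<Sum>i<n. x (Suc i))"
    by (rule sum.lessThan_Suc_shift)
  also have "\<dots> \<le> x 0 + max_partial_sum n (\<lambda>i. x (Suc i))"
    using Suc by simp
  also have "\<dots> \<le> max_partial_sum (Suc n) x"
    by simp
  finally show ?case .
qed simp

lemma max_partial_sum_cong:
  "(\<And>i. i < n \<Longrightarrow> x i = y i) \<Longrightarrow> max_partial_sum n x = max_partial_sum n y"
proof (induction n arbitrary: x y)
  case (Suc n)
  have "max_partial_sum n (\<lambda>i. x (Suc i)) = max_partial_sum n (\<lambda>i. y (Suc i))"
    by (rule Suc.IH) (use Suc.prems in simp)
  with Suc.prems show ?case
    by simp
qed simp

lemma measurable_max_partial_sum:
  "{k..<k + n} \<subseteq> I \<Longrightarrow>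
    (\<lambda>y. max_partial_sum n (\<lambda>i. y (k + i))) \<in> borel_measurable (PiM I (\<lambda>_. borel))"
proof (induction n arbitrary: k)
  case (Suc n)
  have "(\<lambda>y. y k) \<in> borel_measurable (PiM I (\<lambda>_. borel))"
    using Suc.prems by (intro measurable_component_singleton) auto
  moreover have "(\<lambda>y. max_partial_sum n (\<lambda>i. y (Suc k + i))) \<in> borel_measurable (PiM I (\<lambda>_. borel))"
    by (rule Suc.IH) (use Suc.prems in auto)
  ultimately show ?case
    by (simp, intro borel_measurable_max borel_measurable_add) auto
qed simp

locale iid_neg_drift_walk = prob_space +
  fixes X :: "nat \<Rightarrow> 'a \<Rightarrow> real"
  assumes indep: "indep_vars (\<lambda>_. borel) X UNIV"
    and ident_distr: "\<And>i. distr M borel (X i) = distr M borel (X 0)"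
    and square_integrable: "integrable M (\<lambda>\<omega>. (X 0 \<omega>)\<^sup>2)"
    and negative_drift: "expectation (X 0) < 0"
begin

definition walk_max :: "nat \<Rightarrow> nat \<Rightarrow> 'a \<Rightarrow> real" where
  "walk_max n j \<omega> = max_partial_sum n (\<lambda>i. X (j + i) \<omega>)"

lemma walk_max_0 [simp]: "walk_max 0 j \<omega> = 0"
  by (simp add: walk_max_def)

lemma walk_max_Suc: "walk_max (Suc n) j \<omega> = max 0 (X j \<omega> + walk_max n (Suc j) \<omega>)"
  by (simp add: walk_max_def)

lemma walk_max_nonneg: "0 \<le> walk_max n j \<omega>"
  by (simp add: walk_max_def max_partial_sum_nonneg)

lemma walk_max_mono: "walk_max n j \<omega> \<le> walk_max (Suc n) j \<omega>"
  unfolding walk_max_def by (rule max_partial_sum_mono)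

lemma measurable_X [measurable]: "X i \<in> borel_measurable M"
  using indep unfolding indep_vars_def2 by auto

lemma measurable_walk_max [measurable]: "walk_max n j \<in> borel_measurable M"
proof (induction n arbitrary: j)
  case 0
  show ?case
    by (simp add: walk_max_def[abs_def])
next
  case (Suc n)
  have "walk_max (Suc n) j = (\<lambda>\<omega>. max 0 (X j \<omega> + walk_max n (Suc j) \<omega>))"
    by (simp add: fun_eq_iff walk_max_Suc)
  with Suc show ?case
    by simp
qed

lemma square_integrable_X: "integrable M (\<lambda>\<omega>. (X i \<omega>)\<^sup>2)"
proof -
  have "integrable M (\<lambda>\<omega>. (X k \<omega>)\<^sup>2) \<longleftrightarrow> integrable (distr M borel (X 0)) (\<lambda>x. x\<^sup>2)" for k
    using integrable_distr_eq[of "X k" M borel "\<lambda>x. x\<^sup>2"] ident_distr[of k] by simp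
  then show ?thesis
    using square_integrable by blast
qed

lemma integrable_X: "integrable M (X i)"
  by (rule square_integrable_imp_integrable[OF measurable_X square_integrable_X])

lemma integrable_walk_max:
  "integrable M (walk_max n j) \<and> integrable M (\<lambda>\<omega>. (walk_max n j \<omega>)\<^sup>2)"
proof (induction n arbitrary: j)
  case (Suc n)
  have "integrable M (walk_max n (Suc j))" "integrable M (\<lambda>\<omega>. (walk_max n (Suc j) \<omega>)\<^sup>2)"
    using Suc by auto
  then have bound1: "integrable M (\<lambda>\<omega>. \<bar>X j \<omega>\<bar> + \<bar>walk_max n (Suc j) \<omega>\<bar>)"
    and bound2: "integrable M (\<lambda>\<omega>. 2 * (X j \<omega>)\<^sup>2 + 2 * (walk_max n (Suc j) \<omega>)\<^sup>2)"
    using integrable_X[of j] square_integrable_X[of j] by auto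
  show ?case
  proof
    show "integrable M (walk_max (Suc n) j)"
    proof (rule Bochner_Integration.integrable_bound[OF bound1])
      show "AE \<omega> in M. norm (walk_max (Suc n) j \<omega>) \<le> norm (\<bar>X j \<omega>\<bar> + \<bar>walk_max n (Suc j) \<omega>\<bar>)"
        unfolding walk_max_Suc using abs_max_zero_add_le by simp
    qed (rule measurable_walk_max)
    show "integrable M (\<lambda>\<omega>. (walk_max (Suc n) j \<omega>)\<^sup>2)"
    proof (rule Bochner_Integration.integrable_bound[OF bound2])
      show "AE \<omega> in M. norm ((walk_max (Suc n) j \<omega>)\<^sup>2)
          \<le> norm (2 * (X j \<omega>)\<^sup>2 + 2 * (walk_max n (Suc j) \<omega>)\<^sup>2)"
        unfolding walk_max_Suc using power2_max_zero_add_le by simp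
    qed measurable
  qed
qed (simp add: walk_max_def[abs_def])

lemma distr_X_block:
  assumes "0 < n"
  shows "distr M (PiM {..<n} (\<lambda>_. borel)) (\<lambda>\<omega>. \<lambda>i\<in>{..<n}. X (j + i) \<omega>)
    = PiM {..<n} (\<lambda>_. distr M borel (X 0))"
proof -
  have "indep_vars (\<lambda>_. borel) (\<lambda>i. X (j + i)) UNIV"
    using indep_vars_reindex[of "\<lambda>_. borel" X "(+) j" UNIV] indep_vars_subset[OF indep]
    by (simp add: inj_on_def)
  then have "indep_vars (\<lambda>_. borel) (\<lambda>i. X (j + i)) {..<n}"
    by (rule indep_vars_subset) simp
  then have "distr M (PiM {..<n} (\<lambda>_. borel)) (\<lambda>\<omega>. \<lambda>i\<in>{..<n}. X (j + i) \<omega>)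
      = PiM {..<n} (\<lambda>i. distr M borel (X (j + i)))"
    using \<open>0 < n\<close> by (subst (asm) indep_vars_iff_distr_eq_PiM) auto
  also have "(\<lambda>i. distr M borel (X (j + i))) = (\<lambda>_. distr M borel (X 0))"
    using ident_distr by (intro ext)
  finally show ?thesis .
qed

lemma integral_walk_max_shift:
  fixes h :: "real \<Rightarrow> real"
  assumes [measurable]: "h \<in> borel_measurable borel"
  shows "(\<integral>\<omega>. h (walk_max n j \<omega>) \<partial>M) = (\<integral>\<omega>. h (walk_max n 0 \<omega>) \<partial>M)"
proof (cases "n = 0")
  case False
  have "(\<integral>\<omega>. h (walk_max n k \<omega>) \<partial>M)
      = (\<integral>y. h (max_partial_sum n y) \<partial>PiM {..<n} (\<lambda>_. distr M borel (X 0)))" for k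
  proof -
    have block [measurable]: "(\<lambda>\<omega>. \<lambda>i\<in>{..<n}. X (k + i) \<omega>) \<in> measurable M (PiM {..<n} (\<lambda>_. borel))"
      by (intro measurable_restrict) simp
    have [measurable]: "max_partial_sum n \<in> borel_measurable (PiM {..<n} (\<lambda>_. borel))"
      using measurable_max_partial_sum[of 0 n "{..<n}"] by (simp add: lessThan_atLeast0)
    have h_mps: "(\<lambda>y. h (max_partial_sum n y)) \<in> borel_measurable (PiM {..<n} (\<lambda>_. borel))"
      by measurable
    have "walk_max n k = (\<lambda>\<omega>. max_partial_sum n (\<lambda>i\<in>{..<n}. X (k + i) \<omega>))"
      unfolding walk_max_def by (intro ext max_partial_sum_cong) simp
    then have "(\<integral>\<omega>. h (walk_max n k \<omega>) \<partial>M)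
        = (\<integral>y. h (max_partial_sum n y) \<partial>distr M (PiM {..<n} (\<lambda>_. borel)) (\<lambda>\<omega>. \<lambda>i\<in>{..<n}. X (k + i) \<omega>))"
      by (simp add: integral_distr[OF block h_mps])
    then show ?thesis
      using False by (simp add: distr_X_block)
  qed
  then show ?thesis
    by simp
qed simp

lemma integral_X_mult_walk_max:
  "(\<integral>\<omega>. X j \<omega> * walk_max n (Suc j) \<omega> \<partial>M) = expectation (X j) * expectation (walk_max n (Suc j))"
proof -
  let ?B = "{Suc j..<Suc j + n}"
  have "indep_var (PiM {j} (\<lambda>_. borel)) (\<lambda>\<omega>. \<lambda>i\<in>{j}. X i \<omega>)
      (PiM ?B (\<lambda>_. borel)) (\<lambda>\<omega>. \<lambda>i\<in>?B. X i \<omega>)"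
    by (rule indep_var_restrict[OF indep]) auto
  moreover have "(\<lambda>y. y j) \<in> borel_measurable (PiM {j} (\<lambda>_. borel))"
    by (rule measurable_component_singleton) simp
  moreover have "(\<lambda>y. max_partial_sum n (\<lambda>i. y (Suc j + i))) \<in> borel_measurable (PiM ?B (\<lambda>_. borel))"
    by (rule measurable_max_partial_sum) simp
  ultimately have "indep_var borel ((\<lambda>y. y j) \<circ> (\<lambda>\<omega>. \<lambda>i\<in>{j}. X i \<omega>))
      borel ((\<lambda>y. max_partial_sum n (\<lambda>i. y (Suc j + i))) \<circ> (\<lambda>\<omega>. \<lambda>i\<in>?B. X i \<omega>))"
    by (rule indep_var_compose)
  moreover have "(\<lambda>y. max_partial_sum n (\<lambda>i. y (Suc j + i))) \<circ> (\<lambda>\<omega>. \<lambda>i\<in>?B. X i \<omega>) = walk_max n (Suc j)"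
    unfolding walk_max_def comp_def by (intro ext max_partial_sum_cong) simp
  ultimately have "indep_var borel (X j) borel (walk_max n (Suc j))"
    by (simp add: comp_def)
  then show ?thesis
    using integrable_X integrable_walk_max by (intro indep_var_lebesgue_integral) auto
qed

lemma integrable_X_mult_walk_max: "integrable M (\<lambda>\<omega>. X j \<omega> * walk_max n k \<omega>)"
proof (rule Bochner_Integration.integrable_bound)
  show "integrable M (\<lambda>\<omega>. (X j \<omega>)\<^sup>2 + (walk_max n k \<omega>)\<^sup>2)"
    using square_integrable_X integrable_walk_max by auto
  show "AE \<omega> in M. norm (X j \<omega> * walk_max n k \<omega>) \<le> norm ((X j \<omega>)\<^sup>2 + (walk_max n k \<omega>)\<^sup>2)"
    using abs_mult_le_sum_power2 by simp
qed measurable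

text \<open>With W_n = walk_max n 0, square Lindley's recursion W_(n+1) = max 0 (X 0 + W'_n), where
  W'_n = walk_max n 1 is independent of X 0 and distributed like W_n; then W_n \<le> W_(n+1) lets the
  second moments of W cancel.\<close>
lemma lindley_inequality:
  "0 \<le> expectation (\<lambda>\<omega>. (X 0 \<omega>)\<^sup>2) + 2 * expectation (X 0) * expectation (walk_max n 0)"
proof -
  have pointwise: "(walk_max (Suc n) 0 \<omega>)\<^sup>2
      \<le> (X 0 \<omega>)\<^sup>2 + 2 * (X 0 \<omega> * walk_max n (Suc 0) \<omega>) + (walk_max n (Suc 0) \<omega>)\<^sup>2" for \<omega>
  proof -
    have "(walk_max (Suc n) 0 \<omega>)\<^sup>2 \<le> (X 0 \<omega> + walk_max n (Suc 0) \<omega>)\<^sup>2"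
      unfolding walk_max_Suc by (simp add: max_def)
    then show ?thesis
      by (simp add: power2_eq_square algebra_simps)
  qed
  have sq_int: "integrable M (\<lambda>\<omega>. (walk_max m k \<omega>)\<^sup>2)" for m k
    using integrable_walk_max by blast
  have "expectation (\<lambda>\<omega>. (walk_max n 0 \<omega>)\<^sup>2) \<le> expectation (\<lambda>\<omega>. (walk_max (Suc n) 0 \<omega>)\<^sup>2)"
    using walk_max_mono walk_max_nonneg by (intro integral_mono sq_int power_mono)
  also have "\<dots> \<le> expectation (\<lambda>\<omega>. (X 0 \<omega>)\<^sup>2 + 2 * (X 0 \<omega> * walk_max n (Suc 0) \<omega>)
      + (walk_max n (Suc 0) \<omega>)\<^sup>2)"
    using square_integrable integrable_X_mult_walk_max sq_int
    by (intro integral_mono pointwise Bochner_Integration.integrable_add integrable_mult_right)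
  also have "\<dots> = expectation (\<lambda>\<omega>. (X 0 \<omega>)\<^sup>2) + 2 * expectation (\<lambda>\<omega>. X 0 \<omega> * walk_max n (Suc 0) \<omega>)
      + expectation (\<lambda>\<omega>. (walk_max n (Suc 0) \<omega>)\<^sup>2)"
    using square_integrable integrable_X_mult_walk_max sq_int by simp
  also have "expectation (\<lambda>\<omega>. X 0 \<omega> * walk_max n (Suc 0) \<omega>) = expectation (X 0) * expectation (walk_max n 0)"
    using integral_X_mult_walk_max[of 0 n] integral_walk_max_shift[of "\<lambda>x. x" n "Suc 0"] by simp
  also have "expectation (\<lambda>\<omega>. (walk_max n (Suc 0) \<omega>)\<^sup>2) = expectation (\<lambda>\<omega>. (walk_max n 0 \<omega>)\<^sup>2)"
    using integral_walk_max_shift[of "\<lambda>x. x\<^sup>2" n "Suc 0"] by simp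
  finally show ?thesis
    by simp
qed

lemma expectation_walk_max_le:
  "expectation (walk_max n 0) \<le> expectation (\<lambda>\<omega>. (X 0 \<omega>)\<^sup>2) / (- 2 * expectation (X 0))"
proof -
  have "0 < - 2 * expectation (X 0)"
    using negative_drift by simp
  moreover have "expectation (walk_max n 0) * (- 2 * expectation (X 0)) \<le> expectation (\<lambda>\<omega>. (X 0 \<omega>)\<^sup>2)"
    using lindley_inequality[of n] by (simp add: algebra_simps)
  ultimately show ?thesis
    using pos_le_divide_eq by blast
qed

theorem nn_integral_sup_partial_sums_finite:
  "(\<integral>\<^sup>+\<omega>. (SUP n. ennreal (\<Sum>i<n. X i \<omega>)) \<partial>M) < \<infinity>"
proof -
  have "(\<integral>\<^sup>+\<omega>. (SUP n. ennreal (\<Sum>i<n. X i \<omega>)) \<partial>M) \<le> (\<integral>\<^sup>+\<omega>. (SUP n. ennreal (walk_max n 0 \<omega>)) \<partial>M)"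
  proof (intro nn_integral_mono SUP_mono)
    fix \<omega> n
    have "(\<Sum>i<n. X i \<omega>) \<le> walk_max n 0 \<omega>"
      unfolding walk_max_def using sum_le_max_partial_sum[where x="\<lambda>i. X i \<omega>"] by simp
    then show "\<exists>m\<in>UNIV. ennreal (\<Sum>i<n. X i \<omega>) \<le> ennreal (walk_max m 0 \<omega>)"
      by (intro bexI[of _ n] ennreal_leI) auto
  qed
  also have "\<dots> = (SUP n. (\<integral>\<^sup>+\<omega>. ennreal (walk_max n 0 \<omega>) \<partial>M))"
  proof (rule nn_integral_monotone_convergence_SUP)
    show "incseq (\<lambda>n \<omega>. ennreal (walk_max n 0 \<omega>))"
      by (intro incseq_SucI le_funI ennreal_leI walk_max_mono)
  qed measurable
  also have "\<dots> = (SUP n. ennreal (expectation (walk_max n 0)))"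
    using integrable_walk_max walk_max_nonneg by (subst nn_integral_eq_integral) auto
  also have "\<dots> \<le> ennreal (expectation (\<lambda>\<omega>. (X 0 \<omega>)\<^sup>2) / (- 2 * expectation (X 0)))"
    using expectation_walk_max_le by (intro SUP_least ennreal_leI)
  also have "\<dots> < \<infinity>"
    by simp
  finally show ?thesis .
qed

end

section \<open>Covering claimed segments by windows\<close>

abbreviation window :: "int \<Rightarrow> nat \<Rightarrow> int set" where
  "window i m \<equiv> {i - int m..i + int m}"

lemma window_disjoint_if_far:
  assumes "r \<le> m" "2 * int m < \<bar>i - i0\<bar>"
  shows "window i r \<inter> window i0 m = {}"
proof -
  have False if "k \<in> window i r" "k \<in> window i0 m" for k
    using that assms by auto
  then show ?thesis
    by blast
qed

lemma window_subset_if_near: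
  assumes "r \<le> m" "\<bar>i - i0\<bar> \<le> 2 * int m"
  shows "window i r \<subseteq> window i0 (3 * m)"
  using assms by auto

lemma mass_UN_windows_ge:
  fixes X :: "int \<Rightarrow> real" and r :: "int \<Rightarrow> nat"
  assumes "finite J" and X_nonneg: "\<And>k. 0 \<le> X k" and "0 \<le> \<alpha>"
    and mass: "\<And>i. i \<in> J \<Longrightarrow> \<alpha> * real (r i) \<le> (\<Sum>k\<in>window i (r i). X k)"
    and radius: "\<And>i. i \<in> J \<Longrightarrow> 1 \<le> r i"
  shows "\<alpha> / 7 * real (card (\<Union>i\<in>J. window i (r i))) \<le> (\<Sum>k\<in>(\<Union>i\<in>J. window i (r i)). X k)"
  using \<open>finite J\<close> mass radius
proof (induction J rule: finite_psubset_induct)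
  case (psubset J)
  show ?case
  proof (cases "J = {}")
    case False
    have "Max (r ` J) \<in> r ` J"
      using False psubset.hyps by (intro Max_in) auto
    then obtain i0 where "i0 \<in> J" "r i0 = Max (r ` J)"
      by auto
    then have r_le: "r i \<le> r i0" if "i \<in> J" for i
      using that psubset.hyps by simp
    define m where "m = r i0"
    define J' where "J' = {i\<in>J. 2 * int m < \<bar>i - i0\<bar>}"
    define U' where "U' = (\<Union>i\<in>J'. window i (r i))"
    define U where "U = (\<Union>i\<in>J. window i (r i))"
    have "i0 \<notin> J'"
      unfolding J'_def by simp
    then have "J' \<subset> J"
      using \<open>i0 \<in> J\<close> unfolding J'_def by blast
    then have IH: "\<alpha> / 7 * real (card U') \<le> (\<Sum>k\<in>U'. X k)"
      using psubset.IH psubset.prems unfolding U'_def by auto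
    have "finite U" "finite U'"
      using \<open>J' \<subset> J\<close> psubset.hyps unfolding U_def U'_def by (auto intro: finite_subset)
    have "window i (r i) \<inter> window i0 m = {}" if "i \<in> J'" for i
      using that r_le unfolding J'_def m_def by (intro window_disjoint_if_far) auto
    then have "U' \<inter> window i0 m = {}"
      unfolding U'_def by blast
    moreover have "U' \<union> window i0 m \<subseteq> U"
      using \<open>i0 \<in> J\<close> unfolding U'_def U_def J'_def m_def by auto
    ultimately have mass_U: "(\<Sum>k\<in>U'. X k) + (\<Sum>k\<in>window i0 m. X k) \<le> (\<Sum>k\<in>U. X k)"
      using \<open>finite U\<close> \<open>finite U'\<close> X_nonneg
      by (subst sum.union_disjoint[symmetric]) (auto intro: sum_mono2)
    \<comment> \<open>windows centred near i0 lie in its threefold enlargement, which has 6 m + 1 \<le> 7 m points\<close>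
    have "window i (r i) \<subseteq> window i0 (3 * m)" if "i \<in> J" "i \<notin> J'" for i
      using that r_le unfolding J'_def m_def by (intro window_subset_if_near) auto
    then have "U \<subseteq> U' \<union> window i0 (3 * m)"
      unfolding U_def U'_def by blast
    then have "card U \<le> card U' + card (window i0 (3 * m))"
      using \<open>finite U'\<close> card_Un_le[of U'] by (meson card_mono finite_UnI finite_atLeastAtMost_int le_trans)
    also have "card (window i0 (3 * m)) = 6 * m + 1"
      by simp
    finally have "card U \<le> card U' + 7 * m"
      using psubset.prems(2)[OF \<open>i0 \<in> J\<close>] unfolding m_def by linarith
    then have "real (card U) \<le> real (card U') + 7 * real m"
      using of_nat_mono by fastforce
    then have "\<alpha> / 7 * real (card U) \<le> \<alpha> / 7 * real (card U') + \<alpha> * real m"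
      using mult_left_mono[of _ _ "\<alpha> / 7"] \<open>0 \<le> \<alpha>\<close> by (fastforce simp: algebra_simps)
    with IH mass_U psubset.prems(1)[OF \<open>i0 \<in> J\<close>] show ?thesis
      unfolding U_def m_def by linarith
  qed simp
qed

lemma UN_centered_intervals_eq_interval:
  fixes r :: "int \<Rightarrow> nat" and p q :: int
  assumes "p \<le> q"
  obtains a b where "a \<le> p" "q \<le> b" "(\<Union>i\<in>{p..q}. window i (r i)) = {a..b}"
proof -
  define a where "a = Min ((\<lambda>i. i - int (r i)) ` {p..q})"
  define b where "b = Max ((\<lambda>i. i + int (r i)) ` {p..q})"
  have "a \<in> (\<lambda>i. i - int (r i)) ` {p..q}" "b \<in> (\<lambda>i. i + int (r i)) ` {p..q}"
    unfolding a_def b_def using assms by (intro Min_in Max_in; simp)+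
  then obtain ia ib where ia: "ia \<in> {p..q}" "a = ia - int (r ia)"
    and ib: "ib \<in> {p..q}" "b = ib + int (r ib)"
    by blast
  have a_le: "a \<le> i - int (r i)" and b_ge: "i + int (r i) \<le> b" if "i \<in> {p..q}" for i
    unfolding a_def b_def using that by (intro Min_le Max_ge; simp)+
  have "(\<Union>i\<in>{p..q}. window i (r i)) = {a..b}"
  proof (intro equalityI subsetI)
    fix t assume "t \<in> {a..b}"
    then consider "t < p" | "q < t" | "t \<in> {p..q}"
      by fastforce
    then show "t \<in> (\<Union>i\<in>{p..q}. window i (r i))"
    proof cases
      case 1
      then show ?thesis using \<open>t \<in> {a..b}\<close> ia by (intro UN_I[of ia]) auto
    next
      case 2
      then show ?thesis using \<open>t \<in> {a..b}\<close> ib by (intro UN_I[of ib]) auto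
    next
      case 3
      then show ?thesis by (intro UN_I[of t]) auto
    qed
  qed (use a_le b_ge in fastforce)
  moreover have "a \<le> p" "q \<le> b"
    using a_le[of p] b_ge[of q] assms by auto
  ultimately show ?thesis
    using that by blast
qed

lemma sum_int_interval_split:
  "(\<Sum>k\<in>{- int a..int b}. X k) = X 0 + (\<Sum>i<b. X (int i + 1)) + (\<Sum>i<a. X (- int i - 1))"
proof (induction a)
  case 0
  show ?case
  proof (induction b)
    case (Suc b)
    have "{- int 0..int (Suc b)} = insert (int b + 1) {- int 0..int b}"
      by auto
    with Suc show ?case
      by (simp add: algebra_simps)
  qed simp
next
  case (Suc a)
  have "{- int (Suc a)..int b} = insert (- int a - 1) {- int a..int b}"
    by auto
  with Suc show ?case
    by (simp add: algebra_simps)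
qed

text \<open>The windows of the claimed vertices cover an interval [-na, nb] containing 0 and j.\<close>
lemma claimed_segment_excess_mass:
  fixes X :: "int \<Rightarrow> real" and j :: int
  assumes X_nonneg: "\<And>k. 0 \<le> X k" and "0 \<le> \<gamma>" "\<gamma> \<le> \<alpha> / 7"
    and claimed: "\<And>i. min 0 j \<le> i \<Longrightarrow> i \<le> max 0 j \<Longrightarrow>
      \<exists>m::nat. 1 \<le> m \<and> \<alpha> * real m \<le> (\<Sum>k\<in>window i m. X k)"
  obtains na nb where "(\<alpha> / 7 - \<gamma>) * (real_of_int \<bar>j\<bar> + 1)
    \<le> X 0 + (\<Sum>i<nb. X (int i + 1) - \<gamma>) + (\<Sum>i<na. X (- int i - 1) - \<gamma>)"
proof -
  define J where "J = {min 0 j..max 0 j}"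
  define r where "r i = (SOME m::nat. 1 \<le> m \<and> \<alpha> * real m \<le> (\<Sum>k\<in>window i m. X k))"
    for i
  have r: "1 \<le> r i \<and> \<alpha> * real (r i) \<le> (\<Sum>k\<in>window i (r i). X k)"
    if "i \<in> J" for i
  proof -
    have "\<exists>m::nat. 1 \<le> m \<and> \<alpha> * real m \<le> (\<Sum>k\<in>window i m. X k)"
      using claimed that unfolding J_def by simp
    then show ?thesis
      unfolding r_def by (rule someI_ex)
  qed
  have "min 0 j \<le> max 0 j"
    by simp
  then obtain a b where ab: "a \<le> min 0 j" "max 0 j \<le> b"
    and U: "(\<Union>i\<in>J. window i (r i)) = {a..b}"
    unfolding J_def by (rule UN_centered_intervals_eq_interval)
  have "0 \<le> \<alpha>"
    using assms(2,3) by simp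
  then have "\<alpha> / 7 * real (card (\<Union>i\<in>J. window i (r i)))
      \<le> (\<Sum>k\<in>(\<Union>i\<in>J. window i (r i)). X k)"
    using r by (intro mass_UN_windows_ge X_nonneg) (auto simp: J_def)
  then have "\<alpha> / 7 * real (card {a..b}) \<le> (\<Sum>k\<in>{a..b}. X k)"
    unfolding U .
  moreover obtain na nb where ab_nat: "a = - int na" "b = int nb"
  proof
    show "a = - int (nat (- a))" "b = int (nat b)"
      using ab by auto
  qed
  moreover have "card {- int na..int nb} = na + nb + 1"
    by simp
  ultimately have mass: "\<alpha> / 7 * (real na + real nb + 1)
      \<le> X 0 + (\<Sum>i<nb. X (int i + 1)) + (\<Sum>i<na. X (- int i - 1))"
    by (simp only: sum_int_interval_split) (simp add: algebra_simps)
  have "(\<alpha> / 7 - \<gamma>) * (real_of_int \<bar>j\<bar> + 1)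
      \<le> (\<alpha> / 7 - \<gamma>) * (real na + real nb + 1)"
  proof (rule mult_left_mono)
    have "\<bar>j\<bar> \<le> - a + b"
      using ab by linarith
    then show "real_of_int \<bar>j\<bar> + 1 \<le> real na + real nb + 1"
      using ab_nat by simp
  qed (use assms(3) in simp)
  also have "\<dots> \<le> X 0 + (\<Sum>i<nb. X (int i + 1) - \<gamma>) + (\<Sum>i<na. X (- int i - 1) - \<gamma>)"
    using mass assms(2) by (simp add: sum_subtractf algebra_simps)
  finally show ?thesis
    by (rule that)
qed

section \<open>The cluster of the origin\<close>

lemma set_size_le_if_abs_bounded:
  fixes C :: "int set" and B :: ennreal and c :: real
  assumes "0 < c" and bound: "\<And>j. j \<in> C \<Longrightarrow> ennreal (c * (real_of_int \<bar>j\<bar> + 1)) \<le> B"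
  shows "set_size C \<le> ennreal (2 / c) * B + 3"
proof (cases B)
  case (real r)
  define N where "N = nat \<lceil>r / c\<rceil>"
  have "C \<subseteq> {- int N..int N}"
  proof
    fix j assume "j \<in> C"
    then have "c * (real_of_int \<bar>j\<bar> + 1) \<le> r"
      using bound real by simp
    then have "real_of_int \<bar>j\<bar> \<le> r / c"
      using \<open>0 < c\<close> by (simp add: pos_le_divide_eq algebra_simps)
    then show "j \<in> {- int N..int N}"
      unfolding N_def by auto linarith+
  qed
  then have "finite C" "card C \<le> 2 * N + 1"
    using card_mono[of "{- int N..int N}" C] by (auto intro: finite_subset)
  moreover have "real N \<le> r / c + 1"
    unfolding N_def using real \<open>0 < c\<close> of_int_ceiling_le_add_one[of "r / c"] by simp
  ultimately have "real (card C) \<le> 2 / c * r + 3"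
    using of_nat_mono[of "card C" "2 * N + 1", where 'a=real] by simp
  then have "set_size C \<le> ennreal (2 / c * r + 3)"
    unfolding set_size_def using \<open>finite C\<close> by (simp add: ennreal_of_nat_eq_real_of_nat ennreal_leI)
  also have "\<dots> = ennreal (2 / c * r) + 3"
    using real \<open>0 < c\<close> by (simp add: ennreal_plus)
  also have "ennreal (2 / c * r) = ennreal (2 / c) * ennreal r"
    using real \<open>0 < c\<close> by (intro ennreal_mult) auto
  finally show ?thesis
    using real by simp
qed (use \<open>0 < c\<close> in \<open>simp add: ennreal_mult_top\<close>)

lemma ennreal_add_le: "ennreal (x + y) \<le> ennreal x + ennreal y"
proof -
  have "ennreal (x + y) \<le> ennreal (max 0 x + max 0 y)"
    by (intro ennreal_leI) linarith
  then show ?thesis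
    by (simp add: ennreal_plus ennreal_max_0)
qed

lemma set_size_cluster0_le:
  fixes \<gamma> :: real
  assumes "0 \<le> \<gamma>" "\<gamma> < \<alpha> / 7"
  shows "set_size (cluster0 D d \<alpha> \<omega>) \<le> ennreal (2 / (\<alpha> / 7 - \<gamma>)) *
      (ennreal (real (trunc_var D d 0 \<omega>))
       + (SUP n. ennreal (\<Sum>i<n. real (trunc_var D d (int i + 1) \<omega>) - \<gamma>))
       + (SUP n. ennreal (\<Sum>i<n. real (trunc_var D d (- int i - 1) \<omega>) - \<gamma>))) + 3"
proof -
  define X where "X k = real (trunc_var D d k \<omega>)" for k
  have "set_size (cluster0 D d \<alpha> \<omega>) \<le> ennreal (2 / (\<alpha> / 7 - \<gamma>)) *
      (ennreal (X 0) + (SUP n. ennreal (\<Sum>i<n. X (int i + 1) - \<gamma>))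
       + (SUP n. ennreal (\<Sum>i<n. X (- int i - 1) - \<gamma>))) + 3"
  proof (rule set_size_le_if_abs_bounded)
    show "0 < \<alpha> / 7 - \<gamma>"
      using assms by simp
    fix j assume "j \<in> cluster0 D d \<alpha> \<omega>"
    obtain na nb where "(\<alpha> / 7 - \<gamma>) * (real_of_int \<bar>j\<bar> + 1)
        \<le> X 0 + (\<Sum>i<nb. X (int i + 1) - \<gamma>) + (\<Sum>i<na. X (- int i - 1) - \<gamma>)"
    proof (rule claimed_segment_excess_mass)
      show "\<And>i. min 0 j \<le> i \<Longrightarrow> i \<le> max 0 j \<Longrightarrow>
          \<exists>m::nat. 1 \<le> m \<and> \<alpha> * real m \<le> (\<Sum>k\<in>window i m. X k)"
        using \<open>j \<in> cluster0 D d \<alpha> \<omega>\<close> unfolding cluster0_def claimed_def X_def by auto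
    qed (use assms in \<open>auto simp: X_def\<close>)
    then have "ennreal ((\<alpha> / 7 - \<gamma>) * (real_of_int \<bar>j\<bar> + 1))
        \<le> ennreal (X 0 + (\<Sum>i<nb. X (int i + 1) - \<gamma>) + (\<Sum>i<na. X (- int i - 1) - \<gamma>))"
      by (rule ennreal_leI)
    also have "\<dots> \<le> ennreal (X 0) + ennreal (\<Sum>i<nb. X (int i + 1) - \<gamma>)
        + ennreal (\<Sum>i<na. X (- int i - 1) - \<gamma>)"
      by (rule order_trans[OF ennreal_add_le add_right_mono[OF ennreal_add_le]])
    also have "\<dots> \<le> ennreal (X 0) + (SUP n. ennreal (\<Sum>i<n. X (int i + 1) - \<gamma>))
         + (SUP n. ennreal (\<Sum>i<n. X (- int i - 1) - \<gamma>))"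
      by (intro add_mono order_refl SUP_upper) auto
    finally show "ennreal ((\<alpha> / 7 - \<gamma>) * (real_of_int \<bar>j\<bar> + 1)) \<le> \<dots>" .
  qed
  then show ?thesis
    unfolding X_def .
qed

lemma (in prob_space) iid_neg_drift_walk_reindex:
  fixes D :: "'i \<Rightarrow> 'a \<Rightarrow> 'b" and \<sigma> :: "nat \<Rightarrow> 'i" and f :: "'b \<Rightarrow> real"
  assumes indep: "indep_vars (\<lambda>_. count_space UNIV) D UNIV"
    and ident: "\<And>i. distr M (count_space UNIV) (D i) = distr M (count_space UNIV) (D i0)"
    and "inj \<sigma>"
    and square_integrable: "integrable M (\<lambda>\<omega>. (f (D i0 \<omega>))\<^sup>2)"
    and negative_drift: "expectation (\<lambda>\<omega>. f (D i0 \<omega>)) < 0"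
  shows "iid_neg_drift_walk M (\<lambda>n \<omega>. f (D (\<sigma> n) \<omega>))"
proof
  have measurable_D: "D i \<in> measurable M (count_space UNIV)" for i
    using indep unfolding indep_vars_def2 by auto
  have "indep_vars (\<lambda>_. count_space UNIV) (\<lambda>n. D (\<sigma> n)) UNIV"
    using indep_vars_reindex[OF indep_vars_subset[OF indep] \<open>inj \<sigma>\<close>] by simp
  then show "indep_vars (\<lambda>_. borel) (\<lambda>n \<omega>. f (D (\<sigma> n) \<omega>)) UNIV"
    by (rule indep_vars_compose2) simp
  have distr_f: "distr M borel (\<lambda>\<omega>. f (D i \<omega>)) = distr (distr M (count_space UNIV) (D i0)) borel f" for i
    using distr_distr[of f "count_space UNIV" borel "D i" M] measurable_D ident[of i]
    by (simp add: comp_def)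
  then show "distr M borel (\<lambda>\<omega>. f (D (\<sigma> n) \<omega>)) = distr M borel (\<lambda>\<omega>. f (D (\<sigma> 0) \<omega>))" for n
    by simp
  have transfer_integrable: "integrable M (\<lambda>\<omega>. g (D i \<omega>)) \<longleftrightarrow> integrable M (\<lambda>\<omega>. g (D i0 \<omega>))"
    and transfer_integral: "(\<integral>\<omega>. g (D i \<omega>) \<partial>M) = (\<integral>\<omega>. g (D i0 \<omega>) \<partial>M)"
    for i and g :: "'b \<Rightarrow> real"
    using integrable_distr_eq[OF measurable_D[of i], of g] integral_distr[OF measurable_D[of i], of g]
      integrable_distr_eq[OF measurable_D[of i0], of g] integral_distr[OF measurable_D[of i0], of g]
    unfolding ident[of i] by simp_all
  show "integrable M (\<lambda>\<omega>. (f (D (\<sigma> 0) \<omega>))\<^sup>2)"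
    using transfer_integrable[of "\<lambda>v. (f v)\<^sup>2" "\<sigma> 0"] square_integrable by simp
  show "expectation (\<lambda>\<omega>. f (D (\<sigma> 0) \<omega>)) < 0"
    using transfer_integral[of f "\<sigma> 0"] negative_drift by simp
qed

lemma measurable_trunc_var [measurable]:
  "D k \<in> measurable M (count_space UNIV) \<Longrightarrow> (\<lambda>\<omega>. trunc_var D d k \<omega>) \<in> measurable M (count_space UNIV)"
  unfolding trunc_var_def by (rule measurable_compose[of _ _ "count_space UNIV"]) simp_all

lemma (in prob_space) integrable_trunc_var:
  assumes "D 0 \<in> measurable M (count_space UNIV)" and "integrable M (\<lambda>\<omega>. (real (D 0 \<omega>))\<^sup>2)"
  shows "integrable M (\<lambda>\<omega>. real (trunc_var D d 0 \<omega>))"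
proof (rule square_integrable_imp_integrable)
  show "integrable M (\<lambda>\<omega>. (real (trunc_var D d 0 \<omega>))\<^sup>2)"
  proof (rule Bochner_Integration.integrable_bound[OF assms(2)])
    show "AE \<omega> in M. norm ((real (trunc_var D d 0 \<omega>))\<^sup>2) \<le> norm ((real (D 0 \<omega>))\<^sup>2)"
      unfolding trunc_var_def by (simp add: power_mono)
  qed (use assms(1) in measurable)
qed (use assms(1) in measurable)

lemma (in prob_space) nn_integral_sup_trunc_partial_sums_finite:
  fixes D :: "int \<Rightarrow> 'a \<Rightarrow> nat" and \<sigma> :: "nat \<Rightarrow> int"
  assumes indep: "indep_vars (\<lambda>_. count_space UNIV) D UNIV"
    and ident: "\<And>i. distr M (count_space UNIV) (D i) = distr M (count_space UNIV) (D 0)"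
    and square_integrable: "integrable M (\<lambda>\<omega>. (real (D 0 \<omega>))\<^sup>2)"
    and mean: "expectation (\<lambda>\<omega>. real (trunc_var D d 0 \<omega>)) < \<gamma>"
    and "inj \<sigma>"
  shows "(\<integral>\<^sup>+\<omega>. (SUP n. ennreal (\<Sum>i<n. real (trunc_var D d (\<sigma> i) \<omega>) - \<gamma>)) \<partial>M) < \<infinity>"
proof -
  define f where "f v = real (v - d) - \<gamma>" for v
  have measurable_D0 [measurable]: "D 0 \<in> measurable M (count_space UNIV)"
    using indep unfolding indep_vars_def2 by auto
  have "integrable M (\<lambda>\<omega>. (f (D 0 \<omega>))\<^sup>2)"
  proof (rule Bochner_Integration.integrable_bound)
    show "integrable M (\<lambda>\<omega>. 2 * (real (D 0 \<omega>))\<^sup>2 + 2 * \<gamma>\<^sup>2)"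
      using square_integrable by simp
    have "(f v)\<^sup>2 \<le> 2 * (real v)\<^sup>2 + 2 * \<gamma>\<^sup>2" for v
    proof -
      have "(real (v - d))\<^sup>2 \<le> (real v)\<^sup>2"
        by (intro power_mono) auto
      then show ?thesis
        using power2_diff_le[of "real (v - d)" \<gamma>] unfolding f_def by linarith
    qed
    then show "AE \<omega> in M. norm ((f (D 0 \<omega>))\<^sup>2) \<le> norm (2 * (real (D 0 \<omega>))\<^sup>2 + 2 * \<gamma>\<^sup>2)"
      by simp
  qed measurable
  moreover have "expectation (\<lambda>\<omega>. f (D 0 \<omega>)) < 0"
    using integrable_trunc_var[where D=D and d=d, OF measurable_D0 square_integrable] mean
    unfolding f_def trunc_var_def by (simp add: prob_space)
  ultimately have "iid_neg_drift_walk M (\<lambda>n \<omega>. f (D (\<sigma> n) \<omega>))"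
    by (rule iid_neg_drift_walk_reindex[OF indep ident \<open>inj \<sigma>\<close>])
  from iid_neg_drift_walk.nn_integral_sup_partial_sums_finite[OF this]
  show ?thesis
    unfolding f_def trunc_var_def .
qed

theorem proposition4p3:
  fixes M :: "'a measure" and D :: "int \<Rightarrow> 'a \<Rightarrow> nat" and \<alpha> :: real and d :: nat
  assumes "prob_space M"
    and "prob_space.indep_vars M (\<lambda>_. count_space UNIV) D UNIV"
    and "\<And>i. distr M (count_space UNIV) (D i) = distr M (count_space UNIV) (D 0)"
    and "integrable M (\<lambda>\<omega>. (real (D 0 \<omega>))\<^sup>2)"
    and "\<alpha> > 0"
    and "prob_space.expectation M (\<lambda>\<omega>. real (trunc_var D d 0 \<omega>)) < \<alpha> / 18"
  shows "(\<integral>\<^sup>+ \<omega>. set_size (cluster0 D d \<alpha> \<omega>) \<partial>M) < \<infinity>"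
proof -
  interpret prob_space M by fact
  define \<gamma> where "\<gamma> = \<alpha> / 18"
  define R where "R \<omega> = (SUP n. ennreal (\<Sum>i<n. real (trunc_var D d (int i + 1) \<omega>) - \<gamma>))" for \<omega>
  define L where "L \<omega> = (SUP n. ennreal (\<Sum>i<n. real (trunc_var D d (- int i - 1) \<omega>) - \<gamma>))" for \<omega>
  have measurable_D [measurable]: "D k \<in> measurable M (count_space UNIV)" for k
    using assms(2) unfolding indep_vars_def2 by auto
  have "0 \<le> \<gamma>" "\<gamma> < \<alpha> / 7" "expectation (\<lambda>\<omega>. real (trunc_var D d 0 \<omega>)) < \<gamma>"
    using assms(5,6) unfolding \<gamma>_def by simp_all
  then have "integral\<^sup>N M R < \<infinity>" "integral\<^sup>N M L < \<infinity>"
    unfolding R_def L_def using nn_integral_sup_trunc_partial_sums_finite[OF assms(2-4)]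
    by (simp_all add: inj_def)
  moreover have "(\<integral>\<^sup>+\<omega>. ennreal (real (trunc_var D d 0 \<omega>)) \<partial>M) < \<infinity>"
    using integrableD(2)[OF integrable_trunc_var[where D=D and d=d, OF measurable_D assms(4)]]
    by (simp add: less_top)
  moreover have "(\<integral>\<^sup>+\<omega>. set_size (cluster0 D d \<alpha> \<omega>) \<partial>M)
      \<le> (\<integral>\<^sup>+\<omega>. ennreal (2 / (\<alpha> / 7 - \<gamma>)) * (ennreal (real (trunc_var D d 0 \<omega>)) + R \<omega> + L \<omega>) + 3 \<partial>M)"
    unfolding R_def L_def using \<open>0 \<le> \<gamma>\<close> \<open>\<gamma> < \<alpha> / 7\<close> by (intro nn_integral_mono set_size_cluster0_le)
  moreover have "\<dots> = ennreal (2 / (\<alpha> / 7 - \<gamma>))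
      * ((\<integral>\<^sup>+\<omega>. ennreal (real (trunc_var D d 0 \<omega>)) \<partial>M) + integral\<^sup>N M R + integral\<^sup>N M L) + 3"
    unfolding R_def L_def by (simp add: nn_integral_add nn_integral_cmult emeasure_space_1)
  ultimately show ?thesis
    by (simp add: ennreal_mult_less_top order.strict_trans1)
qed

end
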